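(* Let $X=\mathbb{C}^n$ with the standard inner product $(\cdot,\cdot)$, and consider the problem $u'(t)=F(u(t))=Lu(t)+N(u(t))$, $u(t_0)=u_0$, where the matrix $L$ satisfies $\operatorname{Re}(u,Lu)\le0$ for all $u\in X$. Suppose Assumptions 1 and 2 below hold, and let $\tilde u_n=u(t_n)$. Then $$\big\|\big((I-hL)^{-1}-\varphi_1(hL)\big)F(\tilde u_n)\big\|\le Ch.$$ If further $L\frac{d}{dt}N(u(t))\big|_{t=t_n}$ is uniformly bounded on $X$, then $$\big\|\big((I-\tfrac12hL)^{-1}-\varphi_1(hL)\big)F(\tilde u_n)\big\|\le Ch^2.$$ The constants can be chosen uniformly bounded on $[t_0,T]$, and in particular independent of $n$ and $h$ (i.e. independent of $\|L\|$).
   Context: $\varphi_1(z)=\int_0^1 e^{(1-\theta)z}\,d\theta=(e^z-1)/z$. Assumption 1: $L$ is the generator of a strongly continuous semigroup $e^{tL}$ on $X$. Assumption 2: the problem has a sufficiently smooth solution $u:[0,T]\to X$ with derivatives in $X$, and $N:X\to X$ is sufficiently often Fréchet differentiable in a strip along the exact solution, with all occurring derivatives uniformly bounded. *)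

theory Defs
  imports "HOL-Analysis.Analysis"
begin

definition mat_pow :: "complex^'n^'n \<Rightarrow> nat \<Rightarrow> complex^'n^'n" where
  "mat_pow A k = (((**) A) ^^ k) (mat 1)"

definition mexp :: "complex^'n^'n \<Rightarrow> complex^'n^'n" where
  "mexp A = (\<Sum>k. (1 / fact k) *\<^sub>R mat_pow A k)"

definition phi1 :: "complex^'n^'n \<Rightarrow> complex^'n^'n" where
  "phi1 A = integral {0..1::real} (\<lambda>\<theta>. mexp ((1 - \<theta>) *\<^sub>R A))"

text \<open>Standing setting with uniform bound M (Assumptions 1 and 2, X = C^n).
  u1, u2, u3 are the first three derivatives of the exact solution u on [t0,T];
  N1, N2 are the first two Frechet derivatives of N on a strip around the solution.\<close>
definition setting ::
  "complex^'n^'n \<Rightarrow> (complex^'n \<Rightarrow> complex^'n) \<Rightarrow> (real \<Rightarrow> complex^'n) \<Rightarrow> real \<Rightarrow> real \<Rightarrow> real \<Rightarrow> bool"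
where
  "setting L N u t0 T M \<longleftrightarrow>
     t0 < T \<and>
     (\<forall>v. inner v (L *v v) \<le> 0) \<and>
     (\<exists>u1 u2 u3. \<forall>t\<in>{t0..T}.
        (u has_vector_derivative u1 t) (at t within {t0..T}) \<and>
        (u1 has_vector_derivative u2 t) (at t within {t0..T}) \<and>
        (u2 has_vector_derivative u3 t) (at t within {t0..T}) \<and>
        u1 t = L *v u t + N (u t) \<and>
        norm (u1 t) \<le> M \<and> norm (u2 t) \<le> M \<and> norm (u3 t) \<le> M) \<and>
     (\<exists>\<delta>>0. \<exists>N1 :: complex^'n \<Rightarrow> ((complex^'n) \<Rightarrow>\<^sub>L (complex^'n)).
        \<exists>N2 :: complex^'n \<Rightarrow> ((complex^'n) \<Rightarrow>\<^sub>L ((complex^'n) \<Rightarrow>\<^sub>L (complex^'n))).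
        \<forall>v\<in>(\<Union>t\<in>{t0..T}. ball (u t) \<delta>).
          (N has_derivative blinfun_apply (N1 v)) (at v) \<and>
          (N1 has_derivative blinfun_apply (N2 v)) (at v) \<and>
          norm (N1 v) \<le> M \<and> norm (N2 v) \<le> M)"

end

theory Submission
  imports Defs
begin

text \<open>Put \<open>B = h L\<close>. Dissipativity of \<open>L\<close> makes \<open>exp (s B)\<close> for \<open>s \<ge> 0\<close> and the resolvents
  \<open>(I - c B)\<inverse>\<close> for \<open>c \<ge> 0\<close> contractions commuting with \<open>B\<close>. For \<open>w = (I - a B)\<inverse> v\<close> we have
  \<open>v = w - a B w\<close> and \<open>\<phi>\<^sub>1(B) B w = exp B w - w\<close>, hence
  \<open>(I - a B)\<inverse> v - \<phi>\<^sub>1(B) v = (1 - a) w + a exp B w - \<integral>\<^sub>0\<^sup>1 exp ((1 - \<theta>) B) w d\<theta>\<close>.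
  For \<open>a = 1\<close> and \<open>a = 1/2\<close> this is the error of the rectangle and of the trapezoidal rule for
  \<open>f(\<theta>) = exp ((1 - \<theta>) B) w\<close>, whose first and second derivatives are \<open>exp ((1 - \<theta>) B)\<close> applied
  to \<open>-B w\<close> and \<open>B\<^sup>2 w\<close>. So the two errors are at most \<open>h \<parallel>L v\<parallel>\<close> and \<open>h\<^sup>2 \<parallel>L\<^sup>2 v\<parallel> / 2\<close>, and for
  \<open>v = F(u) = u'\<close> the norms \<open>\<parallel>L F(u)\<parallel>\<close>, \<open>\<parallel>L\<^sup>2 F(u)\<parallel>\<close> are bounded by differentiating the equation.\<close>

section \<open>Quadrature error bounds\<close>

lemma norm_diff_le_vector_derivative_bound:
  fixes f :: "real \<Rightarrow> 'a::banach"
  assumes "a \<le> b"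
    and "\<And>t. t \<in> {a..b} \<Longrightarrow> (f has_vector_derivative f' t) (at t within {a..b})"
    and "\<And>t. t \<in> {a..b} \<Longrightarrow> norm (f' t) \<le> K"
  shows "norm (f b - f a) \<le> K * (b - a)"
proof -
  have "0 \<le> K"
    using assms(1) assms(3)[of a] by (meson atLeastAtMost_iff norm_ge_zero order_refl order_trans)
  moreover have "(f' has_integral (f b - f a)) (cbox a b)"
    using fundamental_theorem_of_calculus[OF assms(1,2)] by simp
  ultimately show ?thesis
    using has_integral_bound[of K f' "f b - f a" a b] assms(1,3) by simp
qed

lemma left_rectangle_rule_error:
  fixes f :: "real \<Rightarrow> 'a::banach"
  assumes f': "\<And>t. t \<in> {0..1} \<Longrightarrow> (f has_vector_derivative f' t) (at t within {0..1})"
    and bound: "\<And>t. t \<in> {0..1} \<Longrightarrow> norm (f' t) \<le> K"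
  shows "norm (f 0 - integral {0..1} f) \<le> K"
proof -
  have K: "0 \<le> K"
    using bound[of 0] by (meson atLeastAtMost_iff norm_ge_zero order_trans zero_le_one order_refl)
  have "continuous_on {0..1} f"
    using f' has_vector_derivative_continuous continuous_on_eq_continuous_within by blast
  then have "f integrable_on {0..1}" by (rule integrable_continuous_real)
  then have "((\<lambda>t. f 0 - f t) has_integral (f 0 - integral {0..1} f)) (cbox 0 1)"
    using has_integral_diff[OF has_integral_const_real[of "f 0" 0 1] integrable_integral]
    by simp
  moreover have "norm (f 0 - f t) \<le> K" if "t \<in> cbox 0 1" for t
  proof -
    have "norm (f t - f 0) \<le> K * (t - 0)"
      using that bound
      by (intro norm_diff_le_vector_derivative_bound[where f' = f'])
         (auto intro: has_vector_derivative_within_subset[OF f'])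
    also have "\<dots> \<le> K" using that K by (simp add: mult_left_le)
    finally show ?thesis by (simp add: norm_minus_commute)
  qed
  ultimately show ?thesis
    using has_integral_bound[OF K, of "\<lambda>t. f 0 - f t" _ 0 1] by simp
qed

lemma first_order_remainder_le:
  fixes f :: "real \<Rightarrow> 'a::banach"
  assumes f': "\<And>t. t \<in> {0..1} \<Longrightarrow> (f has_vector_derivative f' t) (at t within {0..1})"
    and f'': "\<And>t. t \<in> {0..1} \<Longrightarrow> (f' has_vector_derivative f'' t) (at t within {0..1})"
    and bound: "\<And>t. t \<in> {0..1} \<Longrightarrow> norm (f'' t) \<le> K"
    and t: "t \<in> {0..1}"
  shows "norm (f t - f 0 - t *\<^sub>R f' t) \<le> K"
proof -
  have K: "0 \<le> K"
    using bound[of 0] by (meson atLeastAtMost_iff norm_ge_zero order_trans zero_le_one order_refl)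
  have "norm (f' x - f' t) \<le> K" if x: "x \<in> {0..t}" for x
  proof -
    have "norm (f' t - f' x) \<le> K * (t - x)"
      using x t bound
      by (intro norm_diff_le_vector_derivative_bound[where f' = f''])
         (auto intro: has_vector_derivative_within_subset[OF f''])
    also have "\<dots> \<le> K" using x t K by (simp add: mult_left_le)
    finally show ?thesis by (simp add: norm_minus_commute)
  qed
  then have "norm (f t - f 0 - (t - 0) *\<^sub>R f' t) \<le> norm (t - 0) * K"
    using t
    by (intro vector_differentiable_bound_linearization[where S = "{0..t}" and f' = f'])
       (auto intro: has_vector_derivative_within_subset[OF f'] simp: closed_segment_eq_real_ivl)
  also have "\<dots> \<le> K" using t K by (simp add: mult_left_le_one_le)
  finally show ?thesis by simp
qed

lemma trapezoidal_rule_error: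
  fixes f :: "real \<Rightarrow> 'a::banach"
  assumes f': "\<And>t. t \<in> {0..1} \<Longrightarrow> (f has_vector_derivative f' t) (at t within {0..1})"
    and f'': "\<And>t. t \<in> {0..1} \<Longrightarrow> (f' has_vector_derivative f'' t) (at t within {0..1})"
    and bound: "\<And>t. t \<in> {0..1} \<Longrightarrow> norm (f'' t) \<le> K"
  shows "norm ((1/2) *\<^sub>R (f 0 + f 1) - integral {0..1} f) \<le> K / 2"
proof -
  define H where "H t = (t / 2) *\<^sub>R (f 0 + f t) - integral {0..t} f" for t
  have cont: "continuous_on {0..1} f"
    using f' has_vector_derivative_continuous continuous_on_eq_continuous_within by blast
  have H': "(H has_vector_derivative - (1/2) *\<^sub>R (f t - f 0 - t *\<^sub>R f' t)) (at t within {0..1})"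
    if t: "t \<in> {0..1}" for t
  proof -
    have "((\<lambda>t::real. t / 2) has_real_derivative 1/2) (at t within {0..1})"
      by (auto intro!: derivative_eq_intros)
    from has_vector_derivative_scaleR[OF this
        has_vector_derivative_add[OF has_vector_derivative_const f'[OF t]]]
    have "(H has_vector_derivative (t / 2) *\<^sub>R (0 + f' t) + (1/2) *\<^sub>R (f 0 + f t) - f t)
        (at t within {0..1})"
      unfolding H_def
      by (rule has_vector_derivative_diff[OF _ integral_has_vector_derivative[OF cont t]])
    moreover have "(t / 2) *\<^sub>R (0 + f' t) + (1/2) *\<^sub>R (f 0 + f t) - f t
        = - (1/2) *\<^sub>R (f t - f 0 - t *\<^sub>R f' t)"
      by (simp add: algebra_simps flip: scaleR_add_left)
    ultimately show ?thesis by simp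
  qed
  have "norm (H 1 - H 0) \<le> K / 2 * (1 - 0)"
    using first_order_remainder_le[OF f' f'' bound]
    by (intro norm_diff_le_vector_derivative_bound[OF _ H']) auto
  then show ?thesis by (simp add: H_def)
qed

section \<open>The Banach algebra of operators on a Euclidean space\<close>

text \<open>The library does not make \<open>'a \<Rightarrow>\<^sub>L 'a\<close> a normed algebra; a copy with composition as
  multiplication provides \<open>exp\<close> together with its derivative.\<close>

typedef (overloaded) 'a endo = "UNIV :: ('a::euclidean_space \<Rightarrow>\<^sub>L 'a) set"
  morphisms rep_endo Abs_endo by simp

setup_lifting type_definition_endo

instantiation endo :: (euclidean_space) real_normed_algebra_1
begin
lift_definition zero_endo :: "'a endo" is 0 .
lift_definition plus_endo :: "'a endo \<Rightarrow> 'a endo \<Rightarrow> 'a endo" is "(+)" .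
lift_definition minus_endo :: "'a endo \<Rightarrow> 'a endo \<Rightarrow> 'a endo" is "(-)" .
lift_definition uminus_endo :: "'a endo \<Rightarrow> 'a endo" is "uminus" .
lift_definition scaleR_endo :: "real \<Rightarrow> 'a endo \<Rightarrow> 'a endo" is "(*\<^sub>R)" .
lift_definition norm_endo :: "'a endo \<Rightarrow> real" is norm .
lift_definition dist_endo :: "'a endo \<Rightarrow> 'a endo \<Rightarrow> real" is dist .
lift_definition sgn_endo :: "'a endo \<Rightarrow> 'a endo" is sgn .
lift_definition times_endo :: "'a endo \<Rightarrow> 'a endo \<Rightarrow> 'a endo" is "(o\<^sub>L)" .
lift_definition one_endo :: "'a endo" is id_blinfun .
definition uniformity_endo :: "('a endo \<times> 'a endo) filter" where
  "uniformity_endo = (INF e\<in>{0<..}. principal {(x, y). dist x y < e})"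
definition open_endo :: "'a endo set \<Rightarrow> bool" where
  "open_endo U = (\<forall>x\<in>U. eventually (\<lambda>(x', y). x' = x \<longrightarrow> y \<in> U) uniformity)"
instance
proof
  fix a b :: real and x y z :: "'a endo"
  show "a *\<^sub>R (x + y) = a *\<^sub>R x + a *\<^sub>R y" by transfer (simp add: scaleR_add_right)
  show "(a + b) *\<^sub>R x = a *\<^sub>R x + b *\<^sub>R x" by transfer (simp add: scaleR_add_left)
  show "a *\<^sub>R b *\<^sub>R x = (a * b) *\<^sub>R x" by transfer simp
  show "1 *\<^sub>R x = x" by transfer simp
  show "x + y + z = x + (y + z)" by transfer (simp add: add.assoc)
  show "x + y = y + x" by transfer (simp add: add.commute)
  show "0 + x = x" by transfer simp
  show "- x + x = 0" by transfer simp
  show "x - y = x + - y" by transfer simp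
  show "x * y * z = x * (y * z)" by transfer (auto intro!: blinfun_eqI)
  show "(x + y) * z = x * z + y * z"
    by transfer (auto intro!: blinfun_eqI simp: blinfun.add_left blinfun.add_right)
  show "x * (y + z) = x * y + x * z"
    by transfer (auto intro!: blinfun_eqI simp: blinfun.add_right blinfun.add_left)
  show "1 * x = x" by transfer (auto intro!: blinfun_eqI)
  show "x * 1 = x" by transfer (auto intro!: blinfun_eqI)
  show "(0::'a endo) \<noteq> 1"
    by transfer (metis norm_blinfun_id norm_zero zero_neq_one)
  show "a *\<^sub>R x * y = a *\<^sub>R (x * y)"
    by transfer (auto intro!: blinfun_eqI simp: blinfun.scaleR_left blinfun.scaleR_right)
  show "x * a *\<^sub>R y = a *\<^sub>R (x * y)"
    by transfer (auto intro!: blinfun_eqI simp: blinfun.scaleR_right blinfun.scaleR_left)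
  show "dist x y = norm (x - y)" by transfer (simp add: dist_norm)
  show "sgn x = inverse (norm x) *\<^sub>R x" by transfer (simp add: sgn_div_norm)
  show "uniformity = (INF e\<in>{0<..}. principal {(x, y). dist (x::'a endo) y < e})"
    by (simp add: uniformity_endo_def)
  show "open U = (\<forall>x\<in>U. \<forall>\<^sub>F (x', y) in uniformity. x' = x \<longrightarrow> y \<in> U)" for U :: "'a endo set"
    by (simp add: open_endo_def)
  show "(norm x = 0) = (x = 0)" by transfer simp
  show "norm (x + y) \<le> norm x + norm y" by transfer (rule norm_triangle_ineq)
  show "norm (a *\<^sub>R x) = \<bar>a\<bar> * norm x" by transfer simp
  show "norm (x * y) \<le> norm x * norm y" by transfer (rule norm_blinfun_compose)
  show "norm (1::'a endo) = 1" by transfer simp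
qed
end

instance endo :: (euclidean_space) banach
proof
  fix X :: "nat \<Rightarrow> 'a endo"
  assume "Cauchy X"
  then have "Cauchy (\<lambda>n. rep_endo (X n))"
    unfolding Cauchy_def by (simp add: dist_endo.rep_eq)
  then obtain L where "(\<lambda>n. rep_endo (X n)) \<longlonglongrightarrow> L"
    using Cauchy_convergent_iff convergent_def by blast
  then have "X \<longlonglongrightarrow> Abs_endo L"
    unfolding tendsto_iff by (simp add: dist_endo.rep_eq Abs_endo_inverse)
  then show "convergent X" by (auto simp: convergent_def)
qed

lift_definition endo_apply :: "'a::euclidean_space endo \<Rightarrow> 'a \<Rightarrow> 'a" is blinfun_apply .

lemma endo_apply_mult [simp]: "endo_apply (X * Y) x = endo_apply X (endo_apply Y x)"
  by transfer simp

lemma endo_apply_one [simp]: "endo_apply 1 x = x"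
  by transfer simp

lemma endo_apply_scaleR_left [simp]: "endo_apply (a *\<^sub>R X) x = a *\<^sub>R endo_apply X x"
  by transfer (simp add: blinfun.scaleR_left)

lemma endo_apply_diff_right: "endo_apply X (x - y) = endo_apply X x - endo_apply X y"
  by transfer (simp add: blinfun.diff_right)

lemma endo_apply_scaleR_right: "endo_apply X (a *\<^sub>R x) = a *\<^sub>R endo_apply X x"
  by transfer (simp add: blinfun.scaleR_right)

lemma norm_endo_apply: "norm (endo_apply X x) \<le> norm X * norm x"
  by transfer (rule norm_blinfun)

lemma bounded_linear_endo_apply_left: "bounded_linear (\<lambda>X. endo_apply X x)"
  by (rule bounded_linear_intro[where K = "norm x"])
     (transfer, simp add: blinfun.add_left blinfun.scaleR_left,
      transfer, simp add: blinfun.scaleR_left, metis norm_endo_apply)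

lemma endo_eqI: "(\<And>x. endo_apply X x = endo_apply Y x) \<Longrightarrow> X = Y"
  by transfer (auto intro: blinfun_eqI)

definition endo_of_matrix :: "complex^'n^'n \<Rightarrow> (complex^'n) endo" where
  "endo_of_matrix A = Abs_endo (Blinfun ((*v) A))"

definition matrix_of_endo :: "(complex^'n) endo \<Rightarrow> complex^'n^'n" where
  "matrix_of_endo X = matrix (endo_apply X)"

lemma endo_apply_endo_of_matrix [simp]: "endo_apply (endo_of_matrix A) x = A *v x"
  by (simp add: endo_of_matrix_def endo_apply.rep_eq Abs_endo_inverse bounded_linear_Blinfun_apply)

lemma matrix_of_endo_of_matrix [simp]: "matrix_of_endo (endo_of_matrix A) = A"
proof -
  have "endo_apply (endo_of_matrix A) = (*v) A" by (rule ext) simp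
  then show ?thesis by (simp add: matrix_of_endo_def)
qed

lemma matrix_of_endo_scaleR: "matrix_of_endo (r *\<^sub>R X) = r *\<^sub>R matrix_of_endo X"
  by (simp add: matrix_of_endo_def matrix_def vec_eq_iff)

lemma scaleR_matrix_vector_assoc: "((c::real) *\<^sub>R (A::complex^'n^'m)) *v x = c *\<^sub>R (A *v x)"
  by (simp add: vec_eq_iff matrix_vector_mult_def scaleR_sum_right)

lemma matrix_vector_mult_scaleR: "(A::complex^'n^'m) *v ((c::real) *\<^sub>R x) = c *\<^sub>R (A *v x)"
  by (simp add: vec_eq_iff matrix_vector_mult_def scaleR_sum_right)

lemma endo_of_matrix_scaleR: "endo_of_matrix (c *\<^sub>R A) = c *\<^sub>R endo_of_matrix A"
  by (rule endo_eqI) (simp add: scaleR_matrix_vector_assoc)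

lemma endo_of_matrix_power: "endo_of_matrix A ^ k = endo_of_matrix (mat_pow A k)"
  by (induction k) (auto intro!: endo_eqI simp: mat_pow_def matrix_vector_mul_assoc)

lemma norm_vec_le_sum_norm_nth: "norm (v::'a::real_normed_vector^'n) \<le> (\<Sum>i\<in>UNIV. norm (v $ i))"
  unfolding norm_vec_def by (rule L2_set_le_sum) simp

lemma bounded_linear_matrix_of_endo: "bounded_linear matrix_of_endo"
proof (rule bounded_linear_intro[where K = "real CARD('n) * real CARD('n)"])
  fix X Y :: "(complex^'n) endo" and r :: real
  show "matrix_of_endo (X + Y) = matrix_of_endo X + matrix_of_endo Y"
    by (simp add: matrix_of_endo_def matrix_def vec_eq_iff endo_apply.rep_eq plus_endo.rep_eq
        blinfun.add_left)
  show "matrix_of_endo (r *\<^sub>R X) = r *\<^sub>R matrix_of_endo X"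
    by (rule matrix_of_endo_scaleR)
  have entry: "norm (matrix_of_endo X $ i $ j) \<le> norm X" for i j
  proof -
    have "norm (matrix_of_endo X $ i $ j) \<le> norm (endo_apply X (axis j 1))"
      unfolding matrix_of_endo_def matrix_def by (simp add: Finite_Cartesian_Product.norm_nth_le)
    also have "\<dots> \<le> norm X"
      using norm_endo_apply[of X "axis j (1::complex)"] by (simp add: norm_axis_1)
    finally show ?thesis .
  qed
  have "norm (matrix_of_endo X) \<le> (\<Sum>i\<in>UNIV. \<Sum>j\<in>UNIV. norm (matrix_of_endo X $ i $ j))"
    by (rule order_trans[OF norm_vec_le_sum_norm_nth sum_mono[OF norm_vec_le_sum_norm_nth]])
  also have "\<dots> \<le> (\<Sum>i\<in>(UNIV::'n set). \<Sum>j\<in>(UNIV::'n set). norm X)"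
    by (intro sum_mono entry)
  finally show "norm (matrix_of_endo X) \<le> norm X * (real CARD('n) * real CARD('n))"
    by (simp add: mult_ac)
qed

lemma bounded_linear_matrix_vector_mult_left: "bounded_linear (\<lambda>A::complex^'n^'m. A *v x)"
  unfolding linear_conv_bounded_linear[symmetric]
  by (rule linearI) (simp_all add: matrix_vector_mult_add_rdistrib scaleR_matrix_vector_assoc)

lemma mexp_sums: "(\<lambda>k. (1 / fact k) *\<^sub>R mat_pow A k) sums matrix_of_endo (exp (endo_of_matrix A))"
  using bounded_linear.sums[OF bounded_linear_matrix_of_endo exp_converges[of "endo_of_matrix A"]]
  by (simp add: matrix_of_endo_scaleR endo_of_matrix_power divide_inverse)

lemma mexp_eq_exp: "mexp A = matrix_of_endo (exp (endo_of_matrix A))"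
  unfolding mexp_def using mexp_sums by (rule sums_unique[symmetric])

text \<open>\<open>exp (endo_of_matrix A)\<close> is only known to be real-linear, so \<open>matrix_of_endo\<close> cannot simply
  be undone here; instead both series are applied to \<open>x\<close>.\<close>
lemma mexp_mult_vector: "mexp A *v x = endo_apply (exp (endo_of_matrix A)) x"
proof -
  have "(\<lambda>k. ((1 / fact k) *\<^sub>R mat_pow A k) *v x) sums (mexp A *v x)"
    using bounded_linear.sums[OF bounded_linear_matrix_vector_mult_left mexp_sums]
    by (simp add: mexp_eq_exp)
  moreover have "(\<lambda>k. endo_apply (endo_of_matrix A ^ k /\<^sub>R fact k) x)
      sums endo_apply (exp (endo_of_matrix A)) x"
    by (rule bounded_linear.sums[OF bounded_linear_endo_apply_left exp_converges])
  ultimately show ?thesis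
    by (simp add: endo_of_matrix_power scaleR_matrix_vector_assoc divide_inverse sums_unique2)
qed

lemma phi1_mult_vector:
  "phi1 A *v v = integral {0..1} (\<lambda>\<theta>. endo_apply (exp ((1 - \<theta>) *\<^sub>R endo_of_matrix A)) v)"
proof -
  have exp: "isCont (\<lambda>s. exp (s *\<^sub>R endo_of_matrix A)) s" for s
    by (rule has_vector_derivative_continuous[OF exp_scaleR_has_vector_derivative_left])
  have "isCont (\<lambda>\<theta>. exp ((1 - \<theta>) *\<^sub>R endo_of_matrix A)) \<theta>" for \<theta>
    by (rule isCont_o2[where f = "\<lambda>\<theta>. 1 - \<theta>", OF _ exp]) (intro continuous_intros)
  then have "isCont (\<lambda>\<theta>. matrix_of_endo (exp ((1 - \<theta>) *\<^sub>R endo_of_matrix A))) \<theta>" for \<theta>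
    by (rule isCont_o2[OF _ linear_continuous_at[OF bounded_linear_matrix_of_endo]])
  then have "continuous_on {0..1} (\<lambda>\<theta>. matrix_of_endo (exp ((1 - \<theta>) *\<^sub>R endo_of_matrix A)))"
    by (intro continuous_at_imp_continuous_on ballI)
  then have "(\<lambda>\<theta>. mexp ((1 - \<theta>) *\<^sub>R A)) integrable_on {0..1}"
    by (simp add: mexp_eq_exp endo_of_matrix_scaleR integrable_continuous_real)
  from integral_linear[OF this bounded_linear_matrix_vector_mult_left, of v]
  show ?thesis
    by (simp add: phi1_def o_def mexp_mult_vector endo_of_matrix_scaleR)
qed

section \<open>The semigroup of a dissipative operator\<close>

lemma endo_apply_exp_scaleR_has_vector_derivative:
  "((\<lambda>s. endo_apply (exp (s *\<^sub>R B)) x) has_vector_derivative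
     endo_apply B (endo_apply (exp (s *\<^sub>R B)) x)) (at s within S)"
  using bounded_linear.has_vector_derivative[OF bounded_linear_endo_apply_left
      has_vector_derivative_at_within[OF exp_scaleR_has_vector_derivative_left]]
  by simp

lemma endo_apply_exp_scaleR_commute:
  "endo_apply B (endo_apply (exp (s *\<^sub>R B)) x) = endo_apply (exp (s *\<^sub>R B)) (endo_apply B x)"
proof -
  have "B * exp (s *\<^sub>R B) = exp (s *\<^sub>R B) * B"
    by (rule vector_derivative_unique_at[OF exp_scaleR_has_vector_derivative_left
          exp_scaleR_has_vector_derivative_right])
  then show ?thesis by (metis endo_apply_mult)
qed

text \<open>For a dissipative generator the squared norm of a trajectory of \<open>exp (s *\<^sub>R B)\<close>
  has nonpositive derivative.\<close>
lemma norm_endo_apply_exp_scaleR_le: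
  fixes B :: "'a::euclidean_space endo"
  assumes dissipative: "\<And>y. inner y (endo_apply B y) \<le> 0" and "0 \<le> s"
  shows "norm (endo_apply (exp (s *\<^sub>R B)) x) \<le> norm x"
proof -
  define y where "y t = endo_apply (exp (t *\<^sub>R B)) x" for t
  have "((\<lambda>t. inner (y t) (y t)) has_vector_derivative
      inner (y t) (endo_apply B (y t)) + inner (endo_apply B (y t)) (y t)) (at t)" for t
    unfolding y_def
    by (intro bounded_bilinear.has_vector_derivative[OF bounded_bilinear_inner]
        endo_apply_exp_scaleR_has_vector_derivative)
  then have "DERIV (\<lambda>t. inner (y t) (y t)) t :> 2 * inner (y t) (endo_apply B (y t))" for t
    by (simp add: has_real_derivative_iff_has_vector_derivative inner_commute[of "endo_apply B _"])
  then have "inner (y s) (y s) \<le> inner (y 0) (y 0)"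
    using dissipative by (intro DERIV_nonpos_imp_nonincreasing[OF \<open>0 \<le> s\<close>])
      (auto intro!: exI mult_nonneg_nonpos)
  then show ?thesis
    by (simp add: y_def flip: power2_norm_eq_inner)
qed

lemma endo_apply_exp_reversed_has_vector_derivative:
  "((\<lambda>\<theta>. endo_apply (exp ((1 - \<theta>) *\<^sub>R B)) x) has_vector_derivative
     - endo_apply (exp ((1 - \<theta>) *\<^sub>R B)) (endo_apply B x)) (at \<theta> within S)"
proof -
  have "((\<lambda>\<theta>::real. 1 - \<theta>) has_vector_derivative -1) (at \<theta> within S)"
    by (auto intro!: derivative_eq_intros)
  from vector_diff_chain_within[OF this endo_apply_exp_scaleR_has_vector_derivative]
  show ?thesis by (simp add: o_def endo_apply_exp_scaleR_commute)
qed

lemma integrable_endo_apply_exp_reversed: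
  "(\<lambda>\<theta>. endo_apply (exp ((1 - \<theta>) *\<^sub>R B)) x) integrable_on {a..b}"
  by (intro integrable_continuous_real continuous_at_imp_continuous_on ballI
      has_vector_derivative_continuous[OF endo_apply_exp_reversed_has_vector_derivative])

lemma integral_endo_apply_exp_reversed_generator:
  "integral {0..1} (\<lambda>\<theta>. endo_apply (exp ((1 - \<theta>) *\<^sub>R B)) (endo_apply B x))
    = endo_apply (exp B) x - x"
proof -
  have "((\<lambda>\<theta>. - endo_apply (exp ((1 - \<theta>) *\<^sub>R B)) (endo_apply B x)) has_integral
      (endo_apply (exp ((1 - 1) *\<^sub>R B)) x - endo_apply (exp ((1 - 0) *\<^sub>R B)) x)) {0..1}"
    by (rule fundamental_theorem_of_calculus)
       (auto intro: endo_apply_exp_reversed_has_vector_derivative)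
  from has_integral_neg[OF this] show ?thesis
    by (simp add: integral_unique)
qed

context
  fixes B :: "'a::euclidean_space endo"
  assumes dissipative: "\<And>y. inner y (endo_apply B y) \<le> 0"
begin

lemma norm_exp_minus_integral_exp_reversed_le:
  "norm (endo_apply (exp B) x - integral {0..1} (\<lambda>\<theta>. endo_apply (exp ((1 - \<theta>) *\<^sub>R B)) x))
     \<le> norm (endo_apply B x)"
  using left_rectangle_rule_error[OF endo_apply_exp_reversed_has_vector_derivative,
      of B x "norm (endo_apply B x)"]
  by (simp add: norm_endo_apply_exp_scaleR_le[OF dissipative])

lemma norm_mean_exp_minus_integral_exp_reversed_le:
  "norm ((1/2) *\<^sub>R (x + endo_apply (exp B) x)
       - integral {0..1} (\<lambda>\<theta>. endo_apply (exp ((1 - \<theta>) *\<^sub>R B)) x))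
     \<le> norm (endo_apply B (endo_apply B x)) / 2"
proof -
  have "((\<lambda>\<theta>. - endo_apply (exp ((1 - \<theta>) *\<^sub>R B)) (endo_apply B x)) has_vector_derivative
      endo_apply (exp ((1 - \<theta>) *\<^sub>R B)) (endo_apply B (endo_apply B x))) (at \<theta> within S)" for \<theta> S
    using has_vector_derivative_minus[OF endo_apply_exp_reversed_has_vector_derivative] by simp
  from trapezoidal_rule_error[OF endo_apply_exp_reversed_has_vector_derivative this,
      of "norm (endo_apply B (endo_apply B x))"]
  show ?thesis
    by (simp add: norm_endo_apply_exp_scaleR_le[OF dissipative] add.commute)
qed

end

section \<open>Resolvents of dissipative matrices\<close>

lemma matrix_inv_right:
  fixes A :: "'a::field^'n^'n"
  assumes "invertible A"
  shows "A ** matrix_inv A = mat 1" and "matrix_inv A ** A = mat 1"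
proof -
  have "\<exists>A'. A ** A' = mat 1 \<and> A' ** A = mat 1"
    using assms by (simp add: invertible_def)
  then have "A ** matrix_inv A = mat 1 \<and> matrix_inv A ** A = mat 1"
    unfolding matrix_inv_def by (rule someI_ex)
  then show "A ** matrix_inv A = mat 1" and "matrix_inv A ** A = mat 1" by auto
qed

lemma matrix_inv_commute:
  fixes A L :: "'a::field^'n^'n"
  assumes "invertible A" and "L ** A = A ** L"
  shows "L ** matrix_inv A = matrix_inv A ** L"
proof -
  have "L ** matrix_inv A = (matrix_inv A ** A) ** L ** matrix_inv A"
    by (simp add: matrix_inv_right(2)[OF assms(1)])
  also have "\<dots> = matrix_inv A ** (L ** A) ** matrix_inv A"
    by (simp add: assms(2) matrix_mul_assoc)
  also have "\<dots> = matrix_inv A ** L ** (A ** matrix_inv A)"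
    by (simp add: matrix_mul_assoc)
  finally show ?thesis
    by (simp add: matrix_inv_right(1)[OF assms(1)])
qed

context
  fixes L :: "complex^'n^'n"
  assumes dissipative: "\<And>v. inner v (L *v v) \<le> 0"
begin

lemma norm_le_norm_mat_1_minus_scaleR:
  assumes "0 \<le> c"
  shows "norm x \<le> norm ((mat 1 - c *\<^sub>R L) *v x)"
proof -
  have eq: "(mat 1 - c *\<^sub>R L) *v x = x - c *\<^sub>R (L *v x)"
    by (simp add: matrix_vector_mult_diff_rdistrib scaleR_matrix_vector_assoc)
  have "(norm ((mat 1 - c *\<^sub>R L) *v x))\<^sup>2
      = (norm x)\<^sup>2 - 2 * (c * inner x (L *v x)) + c\<^sup>2 * (norm (L *v x))\<^sup>2"
    unfolding eq power2_norm_eq_inner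
    by (simp add: inner_diff_left inner_diff_right inner_commute power2_eq_square algebra_simps)
  moreover have "c * inner x (L *v x) \<le> 0"
    using dissipative[of x] assms by (simp add: mult_nonneg_nonpos)
  ultimately show ?thesis
    by (smt (verit) power2_le_imp_le norm_ge_zero zero_le_power2 mult_nonneg_nonneg)
qed

lemma invertible_mat_1_minus_scaleR:
  assumes "0 \<le> c"
  shows "invertible (mat 1 - c *\<^sub>R L)"
proof -
  have "inj ((*v) (mat 1 - c *\<^sub>R L))"
  proof (rule injI)
    fix x y assume "(mat 1 - c *\<^sub>R L) *v x = (mat 1 - c *\<^sub>R L) *v y"
    then have "(mat 1 - c *\<^sub>R L) *v (x - y) = 0" by (simp add: matrix_vector_mult_diff_distrib)
    then show "x = y" using norm_le_norm_mat_1_minus_scaleR[OF assms, of "x - y"] by simp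
  qed
  then show ?thesis
    using matrix_left_invertible_injective invertible_left_inverse by blast
qed

lemma norm_resolvent_le:
  assumes "0 \<le> c"
  shows "norm (matrix_inv (mat 1 - c *\<^sub>R L) *v y) \<le> norm y"
  using norm_le_norm_mat_1_minus_scaleR[OF assms, of "matrix_inv (mat 1 - c *\<^sub>R L) *v y"]
  by (simp add: matrix_vector_mul_assoc
      matrix_inv_right(1)[OF invertible_mat_1_minus_scaleR[OF assms]])

lemma resolvent_commute:
  assumes "0 \<le> c"
  shows "L *v (matrix_inv (mat 1 - c *\<^sub>R L) *v y) = matrix_inv (mat 1 - c *\<^sub>R L) *v (L *v y)"
proof -
  have "L ** (mat 1 - c *\<^sub>R L) = (mat 1 - c *\<^sub>R L) ** L"
    unfolding matrix_eq
    by (simp add: matrix_vector_mul_assoc[symmetric] matrix_vector_mult_diff_rdistrib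
        matrix_vector_mult_diff_distrib scaleR_matrix_vector_assoc matrix_vector_mult_scaleR)
  from matrix_inv_commute[OF invertible_mat_1_minus_scaleR[OF assms] this]
  show ?thesis by (simp add: matrix_vector_mul_assoc)
qed

lemma dissipative_endo_of_matrix_scaleR:
  assumes "0 \<le> h"
  shows "inner y (endo_apply (endo_of_matrix (h *\<^sub>R L)) y) \<le> 0"
  using dissipative[of y] assms by (simp add: scaleR_matrix_vector_assoc mult_nonneg_nonpos)

lemma resolvent_minus_phi1_mult_vector:
  assumes "0 \<le> a" and "0 \<le> h" and "c = a * h"
  defines "R \<equiv> matrix_inv (mat 1 - c *\<^sub>R L)" and "B \<equiv> endo_of_matrix (h *\<^sub>R L)"
  shows "(R - phi1 (h *\<^sub>R L)) *v v
    = R *v v - integral {0..1} (\<lambda>\<theta>. endo_apply (exp ((1 - \<theta>) *\<^sub>R B)) (R *v v))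
      + a *\<^sub>R (endo_apply (exp B) (R *v v) - R *v v)"
proof -
  define w where "w = R *v v"
  define E where "E \<theta> = exp ((1 - \<theta>) *\<^sub>R B)" for \<theta>
  have "v = (mat 1 - c *\<^sub>R L) *v w"
    using assms(1-3) by (simp add: w_def R_def matrix_vector_mul_assoc
        matrix_inv_right(1)[OF invertible_mat_1_minus_scaleR])
  also have "\<dots> = w - a *\<^sub>R endo_apply B w"
    by (simp add: B_def assms(3) matrix_vector_mult_diff_rdistrib scaleR_matrix_vector_assoc)
  finally have v: "v = w - a *\<^sub>R endo_apply B w" .
  have "phi1 (h *\<^sub>R L) *v v
      = integral {0..1} (\<lambda>\<theta>. endo_apply (E \<theta>) w - a *\<^sub>R endo_apply (E \<theta>) (endo_apply B w))"
    by (simp add: phi1_mult_vector v E_def B_def endo_apply_diff_right endo_apply_scaleR_right)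
  also have "\<dots> = integral {0..1} (\<lambda>\<theta>. endo_apply (E \<theta>) w) - a *\<^sub>R (endo_apply (exp B) w - w)"
    by (subst integral_diff)
       (simp_all add: E_def integrable_endo_apply_exp_reversed integrable_cmul
        integral_endo_apply_exp_reversed_generator)
  finally show ?thesis
    by (simp add: matrix_vector_mult_diff_rdistrib w_def E_def)
qed

lemma norm_resolvent_minus_phi1_le:
  assumes "0 \<le> h"
  shows "norm ((matrix_inv (mat 1 - h *\<^sub>R L) - phi1 (h *\<^sub>R L)) *v v) \<le> h * norm (L *v v)"
proof -
  define R where "R = matrix_inv (mat 1 - h *\<^sub>R L)"
  define B where "B = endo_of_matrix (h *\<^sub>R L)"
  define w where "w = R *v v"
  define I where "I = integral {0..1} (\<lambda>\<theta>. endo_apply (exp ((1 - \<theta>) *\<^sub>R B)) w)"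
  have "(R - phi1 (h *\<^sub>R L)) *v v = w - I + 1 *\<^sub>R (endo_apply (exp B) w - w)"
    unfolding R_def B_def w_def I_def
    by (rule resolvent_minus_phi1_mult_vector) (use assms in simp_all)
  also have "\<dots> = endo_apply (exp B) w - I"
    by simp
  finally have "norm ((R - phi1 (h *\<^sub>R L)) *v v) = norm (endo_apply (exp B) w - I)"
    by simp
  also have "\<dots> \<le> norm (endo_apply B w)"
    unfolding I_def B_def
    by (rule norm_exp_minus_integral_exp_reversed_le
        [OF dissipative_endo_of_matrix_scaleR[OF assms]])
  also have "\<dots> = h * norm (R *v (L *v v))"
    using assms by (simp add: B_def R_def w_def scaleR_matrix_vector_assoc resolvent_commute)
  also have "\<dots> \<le> h * norm (L *v v)"
    using assms by (simp add: R_def mult_left_mono norm_resolvent_le)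
  finally show ?thesis by (simp add: R_def)
qed

lemma norm_half_resolvent_minus_phi1_le:
  assumes "0 \<le> h"
  shows "norm ((matrix_inv (mat 1 - (h / 2) *\<^sub>R L) - phi1 (h *\<^sub>R L)) *v v)
    \<le> h\<^sup>2 / 2 * norm (L *v (L *v v))"
proof -
  define R where "R = matrix_inv (mat 1 - (h / 2) *\<^sub>R L)"
  define B where "B = endo_of_matrix (h *\<^sub>R L)"
  define w where "w = R *v v"
  define I where "I = integral {0..1} (\<lambda>\<theta>. endo_apply (exp ((1 - \<theta>) *\<^sub>R B)) w)"
  have "(R - phi1 (h *\<^sub>R L)) *v v = w - I + (1/2) *\<^sub>R (endo_apply (exp B) w - w)"
    unfolding R_def B_def w_def I_def
    by (rule resolvent_minus_phi1_mult_vector) (use assms in simp_all)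
  also have "\<dots> = (1/2) *\<^sub>R (w + endo_apply (exp B) w) - I"
    using scaleR_add_left[of "1/2" "1/2" w] by (simp add: scaleR_diff_right scaleR_add_right)
  finally have "norm ((R - phi1 (h *\<^sub>R L)) *v v) = norm ((1/2) *\<^sub>R (w + endo_apply (exp B) w) - I)"
    by simp
  also have "\<dots> \<le> norm (endo_apply B (endo_apply B w)) / 2"
    unfolding I_def B_def
    by (rule norm_mean_exp_minus_integral_exp_reversed_le
        [OF dissipative_endo_of_matrix_scaleR[OF assms]])
  also have "\<dots> = h\<^sup>2 / 2 * norm (R *v (L *v (L *v v)))"
    using assms by (simp add: B_def R_def w_def scaleR_matrix_vector_assoc matrix_vector_mult_scaleR
        resolvent_commute power2_eq_square)
  also have "\<dots> \<le> h\<^sup>2 / 2 * norm (L *v (L *v v))"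
    using assms by (simp add: R_def mult_left_mono norm_resolvent_le)
  finally show ?thesis by (simp add: R_def)
qed

end

section \<open>Bounds along the exact solution\<close>

locale smooth_solution =
  fixes L :: "complex^'n^'n" and N :: "complex^'n \<Rightarrow> complex^'n" and u :: "real \<Rightarrow> complex^'n"
    and t0 T M :: real and u1 u2 u3 :: "real \<Rightarrow> complex^'n"
    and N1 :: "complex^'n \<Rightarrow> (complex^'n) \<Rightarrow>\<^sub>L (complex^'n)"
    and N2 :: "complex^'n \<Rightarrow> (complex^'n) \<Rightarrow>\<^sub>L ((complex^'n) \<Rightarrow>\<^sub>L (complex^'n))"
  assumes interval: "t0 < T"
    and u_deriv: "t \<in> {t0..T} \<Longrightarrow> (u has_vector_derivative u1 t) (at t within {t0..T})"
    and u1_deriv: "t \<in> {t0..T} \<Longrightarrow> (u1 has_vector_derivative u2 t) (at t within {t0..T})"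
    and u2_deriv: "t \<in> {t0..T} \<Longrightarrow> (u2 has_vector_derivative u3 t) (at t within {t0..T})"
    and ode: "t \<in> {t0..T} \<Longrightarrow> u1 t = L *v u t + N (u t)"
    and norm_u1: "t \<in> {t0..T} \<Longrightarrow> norm (u1 t) \<le> M"
    and norm_u2: "t \<in> {t0..T} \<Longrightarrow> norm (u2 t) \<le> M"
    and norm_u3: "t \<in> {t0..T} \<Longrightarrow> norm (u3 t) \<le> M"
    and N_deriv: "t \<in> {t0..T} \<Longrightarrow> (N has_derivative blinfun_apply (N1 (u t))) (at (u t))"
    and N1_deriv: "t \<in> {t0..T} \<Longrightarrow> (N1 has_derivative blinfun_apply (N2 (u t))) (at (u t))"
    and norm_N1: "t \<in> {t0..T} \<Longrightarrow> norm (N1 (u t)) \<le> M"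
    and norm_N2: "t \<in> {t0..T} \<Longrightarrow> norm (N2 (u t)) \<le> M"

lemma setting_imp_smooth_solution:
  assumes "setting L N u t0 T M"
  shows "\<exists>u1 u2 u3 N1 N2. smooth_solution L N u t0 T M u1 u2 u3 N1 N2"
proof -
  from assms obtain u1 u2 u3 where "t0 < T"
    and u: "\<forall>t\<in>{t0..T}. (u has_vector_derivative u1 t) (at t within {t0..T}) \<and>
        (u1 has_vector_derivative u2 t) (at t within {t0..T}) \<and>
        (u2 has_vector_derivative u3 t) (at t within {t0..T}) \<and>
        u1 t = L *v u t + N (u t) \<and> norm (u1 t) \<le> M \<and> norm (u2 t) \<le> M \<and> norm (u3 t) \<le> M"
    unfolding setting_def by blast
  from assms obtain \<delta> :: real and N1 N2 where "\<delta> > 0"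
    and N: "\<forall>v\<in>(\<Union>t\<in>{t0..T}. ball (u t) \<delta>).
        (N has_derivative blinfun_apply (N1 v)) (at v) \<and>
        (N1 has_derivative blinfun_apply (N2 v)) (at v) \<and> norm (N1 v) \<le> M \<and> norm (N2 v) \<le> M"
    unfolding setting_def by blast
  have "u t \<in> (\<Union>t\<in>{t0..T}. ball (u t) \<delta>)" if "t \<in> {t0..T}" for t
    using that \<open>\<delta> > 0\<close> by (intro UN_I[of t]) auto
  with \<open>t0 < T\<close> u N have "smooth_solution L N u t0 T M u1 u2 u3 N1 N2"
    by unfold_locales blast+
  then show ?thesis by blast
qed

context smooth_solution
begin

lemma M_nonneg: "0 \<le> M"
proof -
  have "norm (u1 t0) \<le> M" using interval by (intro norm_u1) simp
  then show ?thesis by (meson norm_ge_zero order_trans)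
qed

lemma has_vector_derivative_unique:
  assumes "t \<in> {t0..T}"
    and "(f has_vector_derivative a) (at t within {t0..T})"
    and "(f has_vector_derivative b) (at t within {t0..T})"
  shows "a = b"
  using vector_derivative_unique_within_closed_interval[OF interval, of t] assms by simp

lemma comp_u_has_vector_derivative:
  assumes "(G has_derivative blinfun_apply D) (at (u t))" and "t \<in> {t0..T}"
  shows "((\<lambda>s. G (u s)) has_vector_derivative D (u1 t)) (at t within {t0..T})"
  using has_derivative_compose[OF u_deriv[OF assms(2), unfolded has_vector_derivative_def] assms(1)]
  by (simp add: has_vector_derivative_def blinfun.scaleR_right)

lemma u2_eq:
  assumes t: "t \<in> {t0..T}"
  shows "u2 t = L *v u1 t + N1 (u t) (u1 t)"
proof -
  have "((\<lambda>s. L *v u s + N (u s)) has_vector_derivative L *v u1 t + N1 (u t) (u1 t))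
      (at t within {t0..T})"
    by (intro has_vector_derivative_add
        bounded_linear.has_vector_derivative[OF matrix_vector_mul_bounded_linear u_deriv[OF t]]
        comp_u_has_vector_derivative[OF N_deriv[OF t] t])
  then have "(u1 has_vector_derivative L *v u1 t + N1 (u t) (u1 t)) (at t within {t0..T})"
    by (rule has_vector_derivative_transform[OF t, rotated]) (simp add: ode)
  then show ?thesis using has_vector_derivative_unique[OF t u1_deriv[OF t]] by blast
qed

lemma u3_eq:
  assumes t: "t \<in> {t0..T}"
  shows "u3 t = L *v u2 t + N2 (u t) (u1 t) (u1 t) + N1 (u t) (u2 t)"
proof -
  have "((\<lambda>s. N1 (u s) (u1 s)) has_vector_derivative N1 (u t) (u2 t) + N2 (u t) (u1 t) (u1 t))
      (at t within {t0..T})"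
    by (rule bounded_bilinear.has_vector_derivative[OF bounded_bilinear_blinfun_apply
          comp_u_has_vector_derivative[OF N1_deriv[OF t] t] u1_deriv[OF t]])
  then have "((\<lambda>s. L *v u1 s + N1 (u s) (u1 s)) has_vector_derivative
      L *v u2 t + (N1 (u t) (u2 t) + N2 (u t) (u1 t) (u1 t))) (at t within {t0..T})"
    by (intro has_vector_derivative_add
        bounded_linear.has_vector_derivative[OF matrix_vector_mul_bounded_linear u1_deriv[OF t]])
  then have "(u2 has_vector_derivative L *v u2 t + (N1 (u t) (u2 t) + N2 (u t) (u1 t) (u1 t)))
      (at t within {t0..T})"
    by (rule has_vector_derivative_transform[OF t, rotated]) (simp add: u2_eq)
  then show ?thesis using has_vector_derivative_unique[OF t u2_deriv[OF t]] by (simp add: add_ac)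
qed

lemma norm_N1_apply_le: "t \<in> {t0..T} \<Longrightarrow> norm (N1 (u t) x) \<le> M * norm x"
  by (rule order_trans[OF norm_blinfun mult_right_mono[OF norm_N1 norm_ge_zero]])

lemma norm_L_vector_field_le:
  assumes t: "t \<in> {t0..T}"
  shows "norm (L *v (L *v u t + N (u t))) \<le> M + M * M"
proof -
  have "norm (L *v (L *v u t + N (u t))) = norm (u2 t - N1 (u t) (u1 t))"
    by (simp add: ode[OF t, symmetric] u2_eq[OF t])
  also have "\<dots> \<le> norm (u2 t) + norm (N1 (u t) (u1 t))"
    by (rule norm_triangle_ineq4)
  also have "\<dots> \<le> M + M * M"
    using norm_u2[OF t] norm_N1_apply_le[OF t, of "u1 t"] mult_left_mono[OF norm_u1[OF t] M_nonneg]
    by linarith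
  finally show ?thesis .
qed

lemma norm_N2_apply_le:
  assumes t: "t \<in> {t0..T}"
  shows "norm (N2 (u t) (u1 t) (u1 t)) \<le> M * (M * M)"
proof -
  have "norm (N2 (u t) (u1 t) (u1 t)) \<le> norm (N2 (u t)) * norm (u1 t) * norm (u1 t)"
    by (rule order_trans[OF norm_blinfun mult_right_mono[OF norm_blinfun norm_ge_zero]])
  also have "\<dots> \<le> M * M * M"
    using norm_N2[OF t] norm_u1[OF t] M_nonneg by (intro mult_mono) auto
  finally show ?thesis by (simp add: mult_ac)
qed

text \<open>Here \<open>L\<^sup>2 F(u) = u''' - N''(u)(u',u') - N'(u) u'' - L (N(u))'\<close>; only the last term
  is not controlled by the smoothness of \<open>u\<close> and \<open>N\<close>.\<close>
lemma norm_L2_vector_field_le: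
  assumes t: "t \<in> {t0..T}"
    and bound: "norm (L *v vector_derivative (\<lambda>s. N (u s)) (at t within {t0..T})) \<le> M"
  shows "norm (L *v (L *v (L *v u t + N (u t)))) \<le> 2 * M + M * M + M * (M * M)"
proof -
  let ?dN = "vector_derivative (\<lambda>s. N (u s)) (at t within {t0..T})"
  have dN: "?dN = N1 (u t) (u1 t)"
    by (rule vector_derivative_within_closed_interval[OF interval t comp_u_has_vector_derivative[OF N_deriv[OF t] t]])
  have "L *v (L *v (L *v u t + N (u t))) = L *v u2 t - L *v ?dN"
    by (simp add: ode[OF t, symmetric] u2_eq[OF t] dN matrix_vector_right_distrib)
  also have "\<dots> = u3 t - N2 (u t) (u1 t) (u1 t) - N1 (u t) (u2 t) - L *v ?dN"
    by (simp add: u3_eq[OF t])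
  finally have "norm (L *v (L *v (L *v u t + N (u t))))
      = norm (u3 t - N2 (u t) (u1 t) (u1 t) - N1 (u t) (u2 t) - L *v ?dN)" by simp
  also have "\<dots> \<le> norm (u3 t) + norm (N2 (u t) (u1 t) (u1 t)) + norm (N1 (u t) (u2 t))
      + norm (L *v ?dN)"
    by (intro order_trans[OF norm_triangle_ineq4] add_right_mono) (simp add: norm_triangle_le_diff)
  also have "\<dots> \<le> M + M * (M * M) + M * M + M"
    using norm_u3[OF t] norm_N2_apply_le[OF t] norm_N1_apply_le[OF t, of "u2 t"]
      mult_left_mono[OF norm_u2[OF t] M_nonneg] bound
    by linarith
  finally show ?thesis by simp
qed

end

lemma setting_dissipative: "setting L N u t0 T M \<Longrightarrow> inner v (L *v v) \<le> 0"
  unfolding setting_def by blast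

lemma setting_norm_resolvent_minus_phi1_le:
  assumes setting: "setting L N u t0 T M" and t: "t \<in> {t0..T}" and "0 \<le> h"
  shows "norm ((matrix_inv (mat 1 - h *\<^sub>R L) - phi1 (h *\<^sub>R L)) *v (L *v u t + N (u t)))
    \<le> (2 * M + M * M + M * (M * M)) * h"
proof -
  from setting_imp_smooth_solution[OF setting] obtain u1 u2 u3 N1 N2
    where "smooth_solution L N u t0 T M u1 u2 u3 N1 N2" by blast
  then interpret smooth_solution L N u t0 T M u1 u2 u3 N1 N2 .
  have "norm ((matrix_inv (mat 1 - h *\<^sub>R L) - phi1 (h *\<^sub>R L)) *v (L *v u t + N (u t)))
      \<le> h * norm (L *v (L *v u t + N (u t)))"
    using setting_dissipative[OF setting] \<open>0 \<le> h\<close> by (rule norm_resolvent_minus_phi1_le)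
  also have "\<dots> \<le> h * (M + M * M)"
    using norm_L_vector_field_le[OF t] \<open>0 \<le> h\<close> by (rule mult_left_mono)
  also have "\<dots> \<le> (2 * M + M * M + M * (M * M)) * h"
    using M_nonneg \<open>0 \<le> h\<close> by (simp add: algebra_simps)
  finally show ?thesis .
qed

lemma setting_norm_half_resolvent_minus_phi1_le:
  assumes setting: "setting L N u t0 T M" and t: "t \<in> {t0..T}" and "0 \<le> h"
    and "norm (L *v vector_derivative (\<lambda>s. N (u s)) (at t within {t0..T})) \<le> M"
  shows "norm ((matrix_inv (mat 1 - (h / 2) *\<^sub>R L) - phi1 (h *\<^sub>R L)) *v (L *v u t + N (u t)))
    \<le> (2 * M + M * M + M * (M * M)) * h\<^sup>2"
proof -
  from setting_imp_smooth_solution[OF setting] obtain u1 u2 u3 N1 N2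
    where "smooth_solution L N u t0 T M u1 u2 u3 N1 N2" by blast
  then interpret smooth_solution L N u t0 T M u1 u2 u3 N1 N2 .
  have "norm ((matrix_inv (mat 1 - (h / 2) *\<^sub>R L) - phi1 (h *\<^sub>R L)) *v (L *v u t + N (u t)))
      \<le> h\<^sup>2 / 2 * norm (L *v (L *v (L *v u t + N (u t))))"
    using setting_dissipative[OF setting] \<open>0 \<le> h\<close> by (rule norm_half_resolvent_minus_phi1_le)
  also have "\<dots> \<le> h\<^sup>2 / 2 * (2 * M + M * M + M * (M * M))"
    using norm_L2_vector_field_le[OF t assms(4)] by (simp add: mult_left_mono)
  also have "\<dots> \<le> (2 * M + M * M + M * (M * M)) * h\<^sup>2"
    using M_nonneg by simp
  finally show ?thesis .
qed

theorem lemma3p2: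
  fixes M :: real
  shows "\<exists>C. \<forall>(L :: complex^'n^'n) N (u :: real \<Rightarrow> complex^'n) t0 T.
     setting L N u t0 T M \<longrightarrow>
       (\<forall>t\<in>{t0..T}. \<forall>h>0.
          norm ((matrix_inv (mat 1 - h *\<^sub>R L) - phi1 (h *\<^sub>R L))
                  *v (L *v u t + N (u t))) \<le> C * h) \<and>
       ((\<forall>t\<in>{t0..T}. norm (L *v vector_derivative (\<lambda>s. N (u s)) (at t within {t0..T})) \<le> M) \<longrightarrow>
         (\<forall>t\<in>{t0..T}. \<forall>h>0.
          norm ((matrix_inv (mat 1 - (h / 2) *\<^sub>R L) - phi1 (h *\<^sub>R L))
                  *v (L *v u t + N (u t))) \<le> C * h\<^sup>2))"
  by (intro exI[of _ "2 * M + M * M + M * (M * M)"] allI impI conjI ballI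
      setting_norm_resolvent_minus_phi1_le setting_norm_half_resolvent_minus_phi1_le) auto

end
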